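(* Let $(M,d)$ be a complete pointed metric space, let $y\in M$, and let $\mu$ be a positive Radon measure on $\beta\widetilde{M}$ concentrated on $p^{-1}\big((\mathcal{R}(M)\setminus\{y\})\times\{y\}\big)$. Then $\mu\preccurlyeq\nu$ for every positive Radon measure $\nu$ on $\beta\widetilde{M}$ with $\Phi^*\nu=\Phi^*\mu$. In particular, $\mu$ is $\preccurlyeq$-minimal. The same conclusions hold if $\mu$ is concentrated on $p^{-1}\big(\{x\}\times(\mathcal{R}(M)\setminus\{x\})\big)$ for some $x\in M$.
   Context: $\mathrm{Lip}_0(M)$: Lipschitz $f:M\to\mathbb{R}$ with $f(0)=0$ ($0$ the base point) normed by the Lipschitz constant. $\widetilde{M}=\{(x,y)\in M\times M:x\ne y\}$, $\beta\widetilde{M}$ its Stone–Čech compactification; Radon measures identified with $C(\beta\widetilde{M})^*$. $\Phi:\mathrm{Lip}_0(M)\to C(\beta\widetilde{M})$ maps $f$ to the continuous extension of $(x,y)\mapsto(f(x)-f(y))/d(x,y)$; $\Phi^*$ is its adjoint. $M^u$ is the uniform (Samuel) compactification of $M$; $p_1,p_2:\beta\widetilde{M}\to M^u$ continuously extend the coordinate projections, $p=(p_1,p_2)$. $\mathcal{R}(M)=\{\xi\in M^u:\overline{d_0}(\xi)<\infty\}$ where $\overline{d_0}:M^u\to[0,\infty]$ continuously extends $x\mapsto d(x,0)$. $G$ is the set of $g\in C(\beta\widetilde{M})$ with $d(x,y)g(x,y)\le d(x,u)g(x,u)+d(u,y)g(u,y)$ for all distinct $x,u,y\in M$; $\mu\preccurlyeq\nu$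 iff $\int g\,d\mu\le\int g\,d\nu$ for all $g\in G$; $\mu$ is $\preccurlyeq$-minimal if every positive $\nu\preccurlyeq\mu$ satisfies $\mu\preccurlyeq\nu$. Throughout, $M$ has at least three distinct points. *)

theory Defs
  imports "HOL-Analysis.Analysis"
begin

text \<open>The metric space M is the type 'a (class complete_space, i.e. a complete metric
space); the base point is an explicit parameter z.\<close>

definition Mtilde :: "('a::metric_space \<times> 'a) set" where
  "Mtilde = {q. fst q \<noteq> snd q}"

text \<open>Bounded continuous real functions on Mtilde; C_b(Mtilde) = C(beta Mtilde).\<close>
definition Cb_Mtilde :: "('a::metric_space \<times> 'a \<Rightarrow> real) set" where
  "Cb_Mtilde = {f. continuous_on Mtilde f \<and> bounded (f ` Mtilde)}"

definition ev_beta :: "'a::metric_space \<times> 'a \<Rightarrow> (('a \<times> 'a \<Rightarrow> real) \<Rightarrow> real)" where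
  "ev_beta q = restrict (\<lambda>f. f q) Cb_Mtilde"

text \<open>Stone--Cech compactification of Mtilde: closure of the evaluation image.\<close>
definition betaM :: "((('a::metric_space \<times> 'a) \<Rightarrow> real) \<Rightarrow> real) topology" where
  "betaM = subtopology (powertop_real Cb_Mtilde)
              ((powertop_real Cb_Mtilde) closure_of (ev_beta ` Mtilde))"

text \<open>Continuous extension to betaM of a bounded continuous function f on Mtilde.\<close>
definition beta_ext :: "('a::metric_space \<times> 'a \<Rightarrow> real) \<Rightarrow> ((('a \<times> 'a) \<Rightarrow> real) \<Rightarrow> real) \<Rightarrow> real" where
  "beta_ext f = (\<lambda>\<xi>. \<xi> f)"

definition Ucb :: "('a::metric_space \<Rightarrow> real) set" where
  "Ucb = {u. uniformly_continuous_on UNIV u \<and> bounded (range u)}"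

definition ev_u :: "'a::metric_space \<Rightarrow> (('a \<Rightarrow> real) \<Rightarrow> real)" where
  "ev_u x = restrict (\<lambda>u. u x) Ucb"

text \<open>Uniform (Samuel) compactification of M.\<close>
definition Mu :: "(('a::metric_space \<Rightarrow> real) \<Rightarrow> real) topology" where
  "Mu = subtopology (powertop_real Ucb) ((powertop_real Ucb) closure_of (range ev_u))"

text \<open>Continuous extensions p1, p2 : betaM \<rightarrow> Mu of the coordinate projections.\<close>
definition p1 :: "((('a::metric_space \<times> 'a) \<Rightarrow> real) \<Rightarrow> real) \<Rightarrow> (('a \<Rightarrow> real) \<Rightarrow> real)" where
  "p1 \<xi> = restrict (\<lambda>u. \<xi> (\<lambda>q. u (fst q))) Ucb"

definition p2 :: "((('a::metric_space \<times> 'a) \<Rightarrow> real) \<Rightarrow> real) \<Rightarrow> (('a \<Rightarrow> real) \<Rightarrow> real)" where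
  "p2 \<xi> = restrict (\<lambda>u. \<xi> (\<lambda>q. u (snd q))) Ucb"

definition d0bar :: "'a::metric_space \<Rightarrow> (('a \<Rightarrow> real) \<Rightarrow> real) \<Rightarrow> ereal" where
  "d0bar z = (THE g. continuous_map Mu euclidean g \<and> (\<forall>x. g (ev_u x) = ereal (dist x z))
                     \<and> (\<forall>\<xi>. \<xi> \<notin> topspace Mu \<longrightarrow> g \<xi> = 0))"

definition RM :: "'a::metric_space \<Rightarrow> (('a \<Rightarrow> real) \<Rightarrow> real) set" where
  "RM z = {\<xi> \<in> topspace Mu. d0bar z \<xi> < \<infinity>}"

definition Lip0 :: "'a::metric_space \<Rightarrow> ('a \<Rightarrow> real) set" where
  "Lip0 z = {f. (\<exists>C. C-lipschitz_on UNIV f) \<and> f z = 0}"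

definition Phi :: "('a::metric_space \<Rightarrow> real) \<Rightarrow> ((('a \<times> 'a) \<Rightarrow> real) \<Rightarrow> real) \<Rightarrow> real" where
  "Phi f = beta_ext (\<lambda>q. (f (fst q) - f (snd q)) / dist (fst q) (snd q))"

definition borel_of :: "'b topology \<Rightarrow> 'b measure" where
  "borel_of T = sigma (topspace T) {U. openin T U}"

definition radon :: "'b topology \<Rightarrow> 'b measure \<Rightarrow> bool" where
  "radon T \<mu> \<longleftrightarrow> sets \<mu> = sets (borel_of T) \<and> space \<mu> = topspace T \<and> finite_measure \<mu> \<and>
     (\<forall>B\<in>sets \<mu>. emeasure \<mu> B = (SUP K\<in>{K. compactin T K \<and> K \<subseteq> B}. emeasure \<mu> K))"

definition Gset :: "(((('a::metric_space \<times> 'a) \<Rightarrow> real) \<Rightarrow> real) \<Rightarrow> real) set" where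
  "Gset = {g. continuous_map betaM euclideanreal g \<and>
     (\<forall>x u y. x \<noteq> u \<and> u \<noteq> y \<and> x \<noteq> y \<longrightarrow>
        dist x y * g (ev_beta (x, y)) \<le> dist x u * g (ev_beta (x, u)) + dist u y * g (ev_beta (u, y)))}"

definition preceq :: "((('a::metric_space \<times> 'a) \<Rightarrow> real) \<Rightarrow> real) measure \<Rightarrow> ((('a \<times> 'a) \<Rightarrow> real) \<Rightarrow> real) measure \<Rightarrow> bool" where
  "preceq \<mu> \<nu> \<longleftrightarrow> (\<forall>g\<in>Gset. integral\<^sup>L \<mu> g \<le> integral\<^sup>L \<nu> g)"

definition preceq_minimal :: "((('a::metric_space \<times> 'a) \<Rightarrow> real) \<Rightarrow> real) measure \<Rightarrow> bool" where
  "preceq_minimal \<mu> \<longleftrightarrow> (\<forall>\<nu>. radon betaM \<nu> \<and> preceq \<nu> \<mu> \<longrightarrow> preceq \<mu> \<nu>)"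

definition PhiStar_eq :: "'a::metric_space \<Rightarrow> ((('a \<times> 'a) \<Rightarrow> real) \<Rightarrow> real) measure \<Rightarrow> ((('a \<times> 'a) \<Rightarrow> real) \<Rightarrow> real) measure \<Rightarrow> bool" where
  "PhiStar_eq z \<mu> \<nu> \<longleftrightarrow> (\<forall>f\<in>Lip0 z. integral\<^sup>L \<mu> (Phi f) = integral\<^sup>L \<nu> (Phi f))"

definition concentrated_on :: "'b measure \<Rightarrow> 'b set \<Rightarrow> bool" where
  "concentrated_on \<mu> A \<longleftrightarrow> A \<in> sets \<mu> \<and> emeasure \<mu> (space \<mu> - A) = 0"

definition p_preimage :: "(('a::metric_space \<Rightarrow> real) \<Rightarrow> real) set \<Rightarrow> (('a \<Rightarrow> real) \<Rightarrow> real) set \<Rightarrow> ((('a \<times> 'a) \<Rightarrow> real) \<Rightarrow> real) set" where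
  "p_preimage S T = {\<xi> \<in> topspace betaM. p1 \<xi> \<in> S \<and> p2 \<xi> \<in> T}"

end

theory Submission
  imports Defs
begin

(* For g in G put h(x,u) = d(x,u) g(x,u). The defining inequality of G is the triangle
   inequality for h on distinct points, and since M has a third point it holds for all points.
   Hence f = h(-,y) satisfies f(x) - f(u) <= h(x,u), i.e. Phi f <= g on the dense image of
   Mtilde and therefore on all of beta Mtilde. At a point xi with p2 xi = y /= p1 xi the two
   sides agree: at (a,b) the difference Phi f - g is the defect h(a,y) - h(b,y) - h(a,b), which
   is O(d(b,y)), divided by d(a,b), which stays away from 0 near xi. So if mu lives on such
   points and Phi* nu = Phi* mu, then int g dmu = int Phi f dmu = int Phi f dnu <= int g dnu.
   The case p1 xi = x /= p2 xi uses f = -h(x,-). Minimality follows because Phi f and -Phi f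
   both lie in G, so nu <= mu forces Phi* nu = Phi* mu. *)

section \<open>Points of the Stone--Cech compactification as functionals\<close>

lemma ev_beta_apply: "F \<in> Cb_Mtilde \<Longrightarrow> ev_beta q F = F q"
  by (simp add: ev_beta_def)

lemma ev_beta_image_subset_closure:
  "ev_beta ` Mtilde \<subseteq> powertop_real Cb_Mtilde closure_of (ev_beta ` Mtilde)"
  by (rule closure_of_subset) (auto simp: ev_beta_def)

lemma ev_beta_in_betaM: "q \<in> Mtilde \<Longrightarrow> ev_beta q \<in> topspace betaM"
  using ev_beta_image_subset_closure by (auto simp: betaM_def ev_beta_def)

lemma betaM_closure_of_ev_beta: "betaM closure_of (ev_beta ` Mtilde) = topspace betaM"
proof -
  let ?P = "powertop_real (Cb_Mtilde :: ('a::metric_space \<times> 'a \<Rightarrow> real) set)"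
  let ?S = "ev_beta ` (Mtilde :: ('a \<times> 'a) set)"
  have "?P closure_of ?S \<inter> ?S = ?S"
    using ev_beta_image_subset_closure by blast
  moreover have "topspace ?P \<inter> ?P closure_of ?S = ?P closure_of ?S"
    using closure_of_subset_topspace[of ?P ?S] by blast
  ultimately show ?thesis
    unfolding betaM_def closure_of_subtopology topspace_subtopology by (simp add: Int_commute)
qed

lemma betaM_le_by_density:
  assumes A: "continuous_map betaM euclideanreal A" and B: "continuous_map betaM euclideanreal B"
    and le: "\<And>q. q \<in> Mtilde \<Longrightarrow> A (ev_beta q) \<le> B (ev_beta q)"
    and \<xi>: "\<xi> \<in> topspace betaM"
  shows "A \<xi> \<le> B \<xi>"
proof -
  let ?C = "{\<eta> \<in> topspace betaM. B \<eta> - A \<eta> \<in> {0..}}"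
  have "betaM closure_of (ev_beta ` Mtilde) \<subseteq> ?C"
  proof (rule closure_of_minimal)
    show "ev_beta ` Mtilde \<subseteq> ?C"
      using le ev_beta_in_betaM by auto
    show "closedin betaM ?C"
      by (rule closedin_continuous_map_preimage) (auto intro: continuous_map_diff A B)
  qed
  then show ?thesis
    using \<xi> betaM_closure_of_ev_beta by auto
qed

lemma betaM_eq_by_density:
  assumes "continuous_map betaM euclideanreal A" and "continuous_map betaM euclideanreal B"
    and "\<And>q. q \<in> Mtilde \<Longrightarrow> A (ev_beta q) = B (ev_beta q)"
    and "\<xi> \<in> topspace betaM"
  shows "A \<xi> = B \<xi>"
  using betaM_le_by_density[OF assms(1,2) _ assms(4)] betaM_le_by_density[OF assms(2,1) _ assms(4)]
    assms(3) by force

lemma continuous_map_betaM_apply: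
  "F \<in> Cb_Mtilde \<Longrightarrow> continuous_map betaM euclideanreal (\<lambda>\<xi>. \<xi> F)"
  unfolding betaM_def
  by (rule continuous_map_from_subtopology) (rule continuous_map_product_projection)

lemma Cb_Mtilde_iff:
  "F \<in> Cb_Mtilde \<longleftrightarrow> continuous_on Mtilde F \<and> (\<exists>b. \<forall>q\<in>Mtilde. \<bar>F q\<bar> \<le> b)"
  by (simp add: Cb_Mtilde_def bounded_real)

lemma Cb_Mtilde_const: "(\<lambda>q. c) \<in> Cb_Mtilde"
  by (auto simp: Cb_Mtilde_iff)

lemma Cb_Mtilde_add: "F \<in> Cb_Mtilde \<Longrightarrow> G \<in> Cb_Mtilde \<Longrightarrow> (\<lambda>q. F q + G q) \<in> Cb_Mtilde"
  by (simp add: Cb_Mtilde_def continuous_on_add bounded_plus_comp)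

lemma Cb_Mtilde_diff: "F \<in> Cb_Mtilde \<Longrightarrow> G \<in> Cb_Mtilde \<Longrightarrow> (\<lambda>q. F q - G q) \<in> Cb_Mtilde"
  by (simp add: Cb_Mtilde_def continuous_on_diff bounded_minus_comp)

lemma Cb_Mtilde_mult:
  assumes "F \<in> Cb_Mtilde" and "G \<in> Cb_Mtilde"
  shows "(\<lambda>q. F q * G q) \<in> Cb_Mtilde"
proof -
  obtain a b where "\<forall>q\<in>Mtilde. \<bar>F q\<bar> \<le> a" and "\<forall>q\<in>Mtilde. \<bar>G q\<bar> \<le> b"
    using assms by (auto simp: Cb_Mtilde_iff)
  then have "\<forall>q\<in>Mtilde. \<bar>F q * G q\<bar> \<le> a * b"
    by (simp add: abs_mult mult_mono')
  then show ?thesis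
    using assms by (auto simp: Cb_Mtilde_iff intro: continuous_on_mult)
qed

lemma betaM_apply_mono:
  "F \<in> Cb_Mtilde \<Longrightarrow> G \<in> Cb_Mtilde \<Longrightarrow> (\<And>q. q \<in> Mtilde \<Longrightarrow> F q \<le> G q)
   \<Longrightarrow> \<xi> \<in> topspace betaM \<Longrightarrow> \<xi> F \<le> \<xi> G"
  by (rule betaM_le_by_density[where A="\<lambda>\<xi>. \<xi> F" and B="\<lambda>\<xi>. \<xi> G"])
     (auto simp: continuous_map_betaM_apply ev_beta_apply)

lemma betaM_apply_const: "\<xi> \<in> topspace betaM \<Longrightarrow> \<xi> (\<lambda>q. c) = c"
  by (rule betaM_eq_by_density[where A="\<lambda>\<xi>. \<xi> (\<lambda>q. c)" and B="\<lambda>\<xi>. c"])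
     (auto simp: continuous_map_betaM_apply ev_beta_apply Cb_Mtilde_const)

lemma betaM_apply_add:
  "F \<in> Cb_Mtilde \<Longrightarrow> G \<in> Cb_Mtilde \<Longrightarrow> \<xi> \<in> topspace betaM
   \<Longrightarrow> \<xi> (\<lambda>q. F q + G q) = \<xi> F + \<xi> G"
  by (rule betaM_eq_by_density[where A="\<lambda>\<xi>. \<xi> (\<lambda>q. F q + G q)" and B="\<lambda>\<xi>. \<xi> F + \<xi> G"])
     (auto simp: continuous_map_betaM_apply ev_beta_apply Cb_Mtilde_add intro: continuous_map_add)

lemma betaM_apply_diff:
  "F \<in> Cb_Mtilde \<Longrightarrow> G \<in> Cb_Mtilde \<Longrightarrow> \<xi> \<in> topspace betaM
   \<Longrightarrow> \<xi> (\<lambda>q. F q - G q) = \<xi> F - \<xi> G"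
  by (rule betaM_eq_by_density[where A="\<lambda>\<xi>. \<xi> (\<lambda>q. F q - G q)" and B="\<lambda>\<xi>. \<xi> F - \<xi> G"])
     (auto simp: continuous_map_betaM_apply ev_beta_apply Cb_Mtilde_diff intro: continuous_map_diff)

lemma betaM_apply_mult:
  "F \<in> Cb_Mtilde \<Longrightarrow> G \<in> Cb_Mtilde \<Longrightarrow> \<xi> \<in> topspace betaM
   \<Longrightarrow> \<xi> (\<lambda>q. F q * G q) = \<xi> F * \<xi> G"
  by (rule betaM_eq_by_density[where A="\<lambda>\<xi>. \<xi> (\<lambda>q. F q * G q)" and B="\<lambda>\<xi>. \<xi> F * \<xi> G"])
     (auto simp: continuous_map_betaM_apply ev_beta_apply Cb_Mtilde_mult
       intro: continuous_map_real_mult)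

lemma betaM_apply_cmult:
  "F \<in> Cb_Mtilde \<Longrightarrow> \<xi> \<in> topspace betaM \<Longrightarrow> \<xi> (\<lambda>q. c * F q) = c * \<xi> F"
  using betaM_apply_mult[OF Cb_Mtilde_const, of F \<xi> c] betaM_apply_const[of \<xi> c] by simp

lemma betaM_apply_abs_diff_le:
  assumes F: "F \<in> Cb_Mtilde" and G: "G \<in> Cb_Mtilde" and \<xi>: "\<xi> \<in> topspace betaM"
    and le: "\<And>q. q \<in> Mtilde \<Longrightarrow> \<bar>F q - c\<bar> \<le> G q"
  shows "\<bar>\<xi> F - c\<bar> \<le> \<xi> G"
proof -
  have "\<xi> F \<le> \<xi> (\<lambda>q. c + G q)"
    by (rule betaM_apply_mono[OF F Cb_Mtilde_add[OF Cb_Mtilde_const G] _ \<xi>])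
      (use le in \<open>force simp: abs_le_iff\<close>)
  moreover have "\<xi> (\<lambda>q. c - G q) \<le> \<xi> F"
    by (rule betaM_apply_mono[OF Cb_Mtilde_diff[OF Cb_Mtilde_const G] F _ \<xi>])
      (use le in \<open>force simp: abs_le_iff\<close>)
  ultimately show ?thesis
    using betaM_apply_add[OF Cb_Mtilde_const G \<xi>] betaM_apply_diff[OF Cb_Mtilde_const G \<xi>]
      betaM_apply_const[OF \<xi>] by (simp add: abs_le_iff)
qed

lemma compact_space_betaM: "compact_space betaM"
proof -
  let ?P = "powertop_real (Cb_Mtilde :: ('a::metric_space \<times> 'a \<Rightarrow> real) set)"
  have "\<forall>F\<in>Cb_Mtilde. \<exists>b. \<forall>q\<in>(Mtilde :: ('a \<times> 'a) set). \<bar>F q\<bar> \<le> b"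
    using Cb_Mtilde_iff by blast
  then obtain bd where bd: "\<forall>F\<in>Cb_Mtilde. \<forall>q\<in>(Mtilde :: ('a \<times> 'a) set). \<bar>F q\<bar> \<le> bd F"
    by (metis bchoice)
  let ?K = "PiE (Cb_Mtilde :: ('a \<times> 'a \<Rightarrow> real) set) (\<lambda>F. {-bd F..bd F})"
  have K: "compactin ?P ?K"
    by (simp add: compactin_PiE)
  then have "closedin ?P ?K"
    by (rule compactin_imp_closedin[rotated]) (simp add: Hausdorff_space_product_topology)
  moreover have "ev_beta q \<in> ?K" if "q \<in> Mtilde" for q
    unfolding ev_beta_def restrict_PiE_iff using bd that by (force simp: abs_le_iff)
  ultimately have "?P closure_of (ev_beta ` Mtilde) \<subseteq> ?K"
    by (intro closure_of_minimal) auto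
  then have "compactin ?P (?P closure_of (ev_beta ` Mtilde))"
    by (rule closed_compactin[OF K]) simp
  then show ?thesis
    unfolding betaM_def by (rule compact_space_subtopology)
qed

lemma continuous_map_betaM_bounded:
  assumes "continuous_map betaM euclideanreal g"
  obtains B where "0 \<le> B" and "\<forall>\<xi>\<in>topspace betaM. \<bar>g \<xi>\<bar> \<le> B"
proof -
  have "compactin euclideanreal (g ` topspace betaM)"
    by (rule image_compactin[OF _ assms]) (use compact_space_betaM in \<open>simp add: compact_space_def\<close>)
  then have "bounded (g ` topspace betaM)"
    by (simp add: compact_imp_bounded)
  then obtain B where "B > 0" and "\<forall>x\<in>g ` topspace betaM. \<bar>x\<bar> \<le> B"
    unfolding bounded_pos by auto
  then show ?thesis
    using that[of B] by auto
qed

lemma continuous_map_ev_beta: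
  "continuous_map (top_of_set (Mtilde :: ('a::metric_space \<times> 'a) set)) betaM ev_beta"
  unfolding betaM_def
proof (rule continuous_map_into_subtopology)
  show "continuous_map (top_of_set (Mtilde :: ('a \<times> 'a) set)) (powertop_real Cb_Mtilde) ev_beta"
    unfolding continuous_map_componentwise
  proof (intro conjI ballI)
    show "ev_beta ` topspace (top_of_set (Mtilde :: ('a \<times> 'a) set)) \<subseteq> extensional Cb_Mtilde"
      by (auto simp: ev_beta_def)
    fix F :: "'a \<times> 'a \<Rightarrow> real"
    assume "F \<in> Cb_Mtilde"
    then show "continuous_map (top_of_set (Mtilde :: ('a \<times> 'a) set)) euclideanreal (\<lambda>q. ev_beta q F)"
      by (simp add: Cb_Mtilde_def ev_beta_apply)
  qed
  show "ev_beta \<in> topspace (top_of_set (Mtilde :: ('a \<times> 'a) set)) \<rightarrow>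
      powertop_real Cb_Mtilde closure_of ev_beta ` Mtilde"
    using ev_beta_image_subset_closure by auto
qed

lemma Cb_Mtilde_comp_ev_beta:
  assumes g: "continuous_map betaM euclideanreal g"
  shows "(\<lambda>q. g (ev_beta q)) \<in> Cb_Mtilde"
  unfolding Cb_Mtilde_iff
proof
  have "continuous_map (top_of_set Mtilde) euclideanreal (g \<circ> ev_beta)"
    by (rule continuous_map_compose[OF continuous_map_ev_beta g])
  then show "continuous_on Mtilde (\<lambda>q. g (ev_beta q))"
    by (simp add: o_def)
  obtain B where "\<forall>\<xi>\<in>topspace betaM. \<bar>g \<xi>\<bar> \<le> B"
    using continuous_map_betaM_bounded[OF g] by blast
  then show "\<exists>b. \<forall>q\<in>Mtilde. \<bar>g (ev_beta q)\<bar> \<le> b"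
    using ev_beta_in_betaM by blast
qed

lemma betaM_apply_comp_ev_beta:
  assumes g: "continuous_map betaM euclideanreal g" and \<xi>: "\<xi> \<in> topspace betaM"
  shows "g \<xi> = \<xi> (\<lambda>q. g (ev_beta q))"
  using betaM_eq_by_density[OF g continuous_map_betaM_apply[OF Cb_Mtilde_comp_ev_beta[OF g]] _ \<xi>]
  by (simp add: ev_beta_apply Cb_Mtilde_comp_ev_beta[OF g])

section \<open>The projections to the uniform compactification\<close>

lemma Cb_Mtilde_comp_Ucb:
  assumes u: "u \<in> Ucb" and \<pi>: "continuous_on UNIV (\<pi> :: 'a::metric_space \<times> 'a \<Rightarrow> 'a)"
  shows "(\<lambda>q. u (\<pi> q)) \<in> Cb_Mtilde"
  unfolding Cb_Mtilde_iff
proof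
  have "continuous_on UNIV u"
    using u by (auto simp: Ucb_def intro: uniformly_continuous_imp_continuous)
  then show "continuous_on Mtilde (\<lambda>q. u (\<pi> q))"
    by (rule continuous_on_compose2[OF _ continuous_on_subset[OF \<pi>]]) auto
  obtain b where "\<forall>x. \<bar>u x\<bar> \<le> b"
    using u by (auto simp: Ucb_def bounded_real)
  then show "\<exists>b. \<forall>q\<in>Mtilde. \<bar>u (\<pi> q)\<bar> \<le> b"
    by blast
qed

lemma trunc_dist_Ucb: "(\<lambda>x. min (dist x y) 1) \<in> Ucb"
  unfolding Ucb_def mem_Collect_eq
proof
  have "1-lipschitz_on UNIV (\<lambda>x. min (dist x y) 1)"
  proof (rule lipschitz_onI)
    fix a b :: 'a
    show "dist (min (dist a y) 1) (min (dist b y) 1) \<le> 1 * dist a b"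
      using abs_dist_diff_le[of a y b] by (simp add: dist_real_def dist_commute min_def abs_le_iff)
  qed simp
  then show "uniformly_continuous_on UNIV (\<lambda>x. min (dist x y) 1)"
    by (rule lipschitz_on_uniformly_continuous)
  show "bounded (range (\<lambda>x. min (dist x y) 1))"
    unfolding bounded_real by (intro exI[of _ 1]) auto
qed

lemma Ucb_le_trunc_dist:
  assumes u: "u \<in> Ucb" and e: "0 < e"
  obtains C where "\<And>x. \<bar>u x - u y\<bar> \<le> e + C * min (dist x y) 1"
proof -
  obtain b where b: "\<And>x. \<bar>u x\<bar> \<le> b"
    using u by (auto simp: Ucb_def bounded_real)
  obtain d where d: "0 < d" and close: "\<And>x. dist x y < d \<Longrightarrow> \<bar>u x - u y\<bar> < e"
    using u e unfolding Ucb_def uniformly_continuous_on_def dist_real_def by blast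
  define C where "C = 2 * b / min d 1"
  have "0 \<le> b"
    using b[of y] by linarith
  then have "0 \<le> C" and C: "C * min d 1 = 2 * b"
    using d by (simp_all add: C_def)
  have "\<bar>u x - u y\<bar> \<le> e + C * min (dist x y) 1" for x
  proof (cases "dist x y < d")
    case True
    then show ?thesis
      using close[of x] \<open>0 \<le> C\<close> by (smt (verit) min.cobounded2 mult_nonneg_nonneg zero_le_dist min_def)
  next
    case False
    then have "C * min d 1 \<le> C * min (dist x y) 1"
      using \<open>0 \<le> C\<close> by (intro mult_left_mono) auto
    then show ?thesis
      using C b[of x] b[of y] e by linarith
  qed
  then show ?thesis
    using that by blast
qed

lemma betaM_apply_comp_eq_iff:
  assumes \<xi>: "\<xi> \<in> topspace betaM" and \<pi>: "continuous_on UNIV (\<pi> :: 'a::metric_space \<times> 'a \<Rightarrow> 'a)"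
  shows "(\<forall>u\<in>Ucb. \<xi> (\<lambda>q. u (\<pi> q)) = u y) \<longleftrightarrow> \<xi> (\<lambda>q. min (dist (\<pi> q) y) 1) = 0"
proof
  assume "\<forall>u\<in>Ucb. \<xi> (\<lambda>q. u (\<pi> q)) = u y"
  from this[rule_format, OF trunc_dist_Ucb[of y]]
  show "\<xi> (\<lambda>q. min (dist (\<pi> q) y) 1) = 0"
    by simp
next
  let ?D = "\<lambda>q. min (dist (\<pi> q) y) 1"
  have D: "?D \<in> Cb_Mtilde"
    by (rule Cb_Mtilde_comp_Ucb[OF trunc_dist_Ucb \<pi>])
  assume D0: "\<xi> ?D = 0"
  show "\<forall>u\<in>Ucb. \<xi> (\<lambda>q. u (\<pi> q)) = u y"
  proof
    fix u :: "'a \<Rightarrow> real"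
    assume u: "u \<in> Ucb"
    have "\<bar>\<xi> (\<lambda>q. u (\<pi> q)) - u y\<bar> \<le> 0 + e" if e: "0 < e" for e
    proof -
      obtain C where C: "\<And>x. \<bar>u x - u y\<bar> \<le> e + C * min (dist x y) 1"
        using Ucb_le_trunc_dist[OF u e] by blast
      have "\<bar>\<xi> (\<lambda>q. u (\<pi> q)) - u y\<bar> \<le> \<xi> (\<lambda>q. e + C * ?D q)"
      proof (rule betaM_apply_abs_diff_le[OF Cb_Mtilde_comp_Ucb[OF u \<pi>] _ \<xi>])
        show "(\<lambda>q. e + C * ?D q) \<in> Cb_Mtilde"
          by (intro Cb_Mtilde_add Cb_Mtilde_const Cb_Mtilde_mult D)
        show "\<bar>u (\<pi> q) - u y\<bar> \<le> e + C * ?D q" for q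
          by (rule C)
      qed
      also have "\<dots> = e"
        using betaM_apply_add[OF Cb_Mtilde_const Cb_Mtilde_mult[OF Cb_Mtilde_const D] \<xi>]
          betaM_apply_const[OF \<xi>] betaM_apply_cmult[OF D \<xi>] D0 by simp
      finally show ?thesis by simp
    qed
    then have "\<bar>\<xi> (\<lambda>q. u (\<pi> q)) - u y\<bar> \<le> 0"
      by (rule field_le_epsilon)
    then show "\<xi> (\<lambda>q. u (\<pi> q)) = u y"
      by simp
  qed
qed

lemma p1_eq_ev_u_iff:
  assumes "\<xi> \<in> topspace betaM"
  shows "p1 \<xi> = ev_u y \<longleftrightarrow> \<xi> (\<lambda>q. min (dist (fst q) y) 1) = 0"
proof -
  have "p1 \<xi> = ev_u y \<longleftrightarrow> (\<forall>u\<in>Ucb. \<xi> (\<lambda>q. u (fst q)) = u y)"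
    by (auto simp: p1_def ev_u_def restrict_def fun_eq_iff)
  also have "\<dots> \<longleftrightarrow> \<xi> (\<lambda>q. min (dist (fst q) y) 1) = 0"
    by (rule betaM_apply_comp_eq_iff[OF assms]) (intro continuous_intros)
  finally show ?thesis .
qed

lemma p2_eq_ev_u_iff:
  assumes "\<xi> \<in> topspace betaM"
  shows "p2 \<xi> = ev_u y \<longleftrightarrow> \<xi> (\<lambda>q. min (dist (snd q) y) 1) = 0"
proof -
  have "p2 \<xi> = ev_u y \<longleftrightarrow> (\<forall>u\<in>Ucb. \<xi> (\<lambda>q. u (snd q)) = u y)"
    by (auto simp: p2_def ev_u_def restrict_def fun_eq_iff)
  also have "\<dots> \<longleftrightarrow> \<xi> (\<lambda>q. min (dist (snd q) y) 1) = 0"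
    by (rule betaM_apply_comp_eq_iff[OF assms]) (intro continuous_intros)
  finally show ?thesis .
qed

lemma abs_min_one_diff_le:
  fixes a b c :: real
  assumes "0 \<le> a" and "0 \<le> b" and "\<bar>a - b\<bar> \<le> c"
  shows "\<bar>min a 1 - min b 1\<bar> \<le> min c 1"
  using assms by (auto simp: min_def abs_le_iff)

lemma betaM_apply_trunc_dist_pos:
  fixes \<xi> :: "(('a::metric_space \<times> 'a \<Rightarrow> real) \<Rightarrow> real)"
  assumes \<xi>: "\<xi> \<in> topspace betaM" and ne: "p1 \<xi> \<noteq> p2 \<xi>" and y: "p1 \<xi> = ev_u y \<or> p2 \<xi> = ev_u y"
  shows "0 < \<xi> (\<lambda>q. min (dist (fst q) (snd q)) 1)"
proof -
  let ?P = "\<lambda>q. min (dist (fst q) y) 1" and ?Q = "\<lambda>q. min (dist (snd q) y) 1"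
  let ?D = "\<lambda>q. min (dist (fst q) (snd q)) 1"
  have P: "?P \<in> Cb_Mtilde" and Q: "?Q \<in> Cb_Mtilde"
    by (intro Cb_Mtilde_comp_Ucb trunc_dist_Ucb continuous_intros)+
  have D: "?D \<in> Cb_Mtilde"
    unfolding Cb_Mtilde_iff by (intro conjI continuous_intros exI[of _ 1]) auto
  have "\<bar>\<xi> (\<lambda>q. ?P q - ?Q q) - 0\<bar> \<le> \<xi> ?D"
  proof (rule betaM_apply_abs_diff_le[OF Cb_Mtilde_diff[OF P Q] D \<xi>])
    fix q :: "'a \<times> 'a"
    show "\<bar>?P q - ?Q q - 0\<bar> \<le> ?D q"
      using abs_min_one_diff_le[OF zero_le_dist zero_le_dist abs_dist_diff_le[of "fst q" y "snd q"]]
      by (simp add: dist_commute)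
  qed
  moreover have "\<xi> (\<lambda>q. ?P q - ?Q q) = \<xi> ?P - \<xi> ?Q"
    by (rule betaM_apply_diff[OF P Q \<xi>])
  moreover have "(\<xi> ?P = 0) \<noteq> (\<xi> ?Q = 0)"
    using p1_eq_ev_u_iff[OF \<xi>] p2_eq_ev_u_iff[OF \<xi>] ne y by metis
  ultimately show ?thesis
    by auto
qed

lemma betaM_apply_eq_of_weighted_bound:
  assumes F1: "F1 \<in> Cb_Mtilde" and F2: "F2 \<in> Cb_Mtilde" and P: "P \<in> Cb_Mtilde" and Q: "Q \<in> Cb_Mtilde"
    and \<xi>: "\<xi> \<in> topspace betaM" and Q0: "\<xi> Q = 0" and P0: "\<xi> P \<noteq> 0"
    and bound: "\<And>q. q \<in> Mtilde \<Longrightarrow> \<bar>(F1 q - F2 q) * P q\<bar> \<le> C * Q q"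
  shows "\<xi> F1 = \<xi> F2"
proof -
  let ?E = "\<lambda>q. (F1 q - F2 q) * P q"
  have E: "?E \<in> Cb_Mtilde"
    by (intro Cb_Mtilde_mult Cb_Mtilde_diff F1 F2 P)
  have "\<bar>\<xi> ?E - 0\<bar> \<le> \<xi> (\<lambda>q. C * Q q)"
    by (rule betaM_apply_abs_diff_le[OF E Cb_Mtilde_mult[OF Cb_Mtilde_const Q] \<xi>]) (simp add: bound)
  then have "\<xi> ?E = 0"
    using betaM_apply_cmult[OF Q \<xi>] Q0 by simp
  moreover have "\<xi> ?E = (\<xi> F1 - \<xi> F2) * \<xi> P"
    using betaM_apply_mult[OF Cb_Mtilde_diff[OF F1 F2] P \<xi>] betaM_apply_diff[OF F1 F2 \<xi>] by simp
  ultimately show ?thesis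
    using P0 by simp
qed

section \<open>Difference quotients and the cone G\<close>

definition diff_quot :: "('a::metric_space \<Rightarrow> real) \<Rightarrow> 'a \<times> 'a \<Rightarrow> real" where
  "diff_quot f = (\<lambda>q. (f (fst q) - f (snd q)) / dist (fst q) (snd q))"

lemma Phi_eq: "Phi f = (\<lambda>\<xi>. \<xi> (diff_quot f))"
  by (simp add: Phi_def beta_ext_def diff_quot_def)

lemma abs_diff_quot_le:
  assumes "L-lipschitz_on UNIV f"
  shows "\<bar>diff_quot f q\<bar> \<le> L"
proof (cases "fst q = snd q")
  case True
  then show ?thesis
    using lipschitz_on_nonneg[OF assms] by (simp add: diff_quot_def)
next
  case False
  then have "0 < dist (fst q) (snd q)"
    by simp
  moreover have "\<bar>f (fst q) - f (snd q)\<bar> \<le> L * dist (fst q) (snd q)"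
    using assms by (auto simp: lipschitz_on_def dist_real_def)
  ultimately show ?thesis
    by (simp add: diff_quot_def abs_divide divide_le_eq)
qed

lemma diff_quot_Cb_Mtilde:
  assumes "L-lipschitz_on UNIV f"
  shows "diff_quot f \<in> Cb_Mtilde"
  unfolding Cb_Mtilde_iff
proof
  have "continuous_on UNIV f"
    using assms by (rule lipschitz_on_continuous_on)
  then show "continuous_on Mtilde (diff_quot f)"
    unfolding diff_quot_def
    by (intro continuous_intros continuous_on_compose2[OF \<open>continuous_on UNIV f\<close>])
      (auto simp: Mtilde_def)
  show "\<exists>b. \<forall>q\<in>Mtilde. \<bar>diff_quot f q\<bar> \<le> b"
    using abs_diff_quot_le[OF assms] by blast
qed

lemma continuous_map_Phi:
  "L-lipschitz_on UNIV f \<Longrightarrow> continuous_map betaM euclideanreal (Phi f)"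
  unfolding Phi_eq by (rule continuous_map_betaM_apply[OF diff_quot_Cb_Mtilde])

lemma Phi_ev_beta:
  assumes "L-lipschitz_on UNIV f" and "x \<noteq> y"
  shows "dist x y * Phi f (ev_beta (x, y)) = f x - f y"
  using assms by (simp add: Phi_eq ev_beta_apply diff_quot_Cb_Mtilde) (simp add: diff_quot_def)

lemma Phi_in_Gset:
  assumes lip: "L-lipschitz_on UNIV f"
  shows "Phi f \<in> Gset"
  unfolding Gset_def using continuous_map_Phi[OF lip] Phi_ev_beta[OF lip] by auto

lemma uminus_Phi_in_Gset:
  assumes lip: "L-lipschitz_on UNIV f"
  shows "(\<lambda>\<xi>. - Phi f \<xi>) \<in> Gset"
  unfolding Gset_def
proof (intro CollectI conjI allI impI)
  show "continuous_map betaM euclideanreal (\<lambda>\<xi>. - Phi f \<xi>)"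
    by (intro continuous_map_minus continuous_map_Phi[OF lip])
  fix x u y :: 'a
  assume "x \<noteq> u \<and> u \<noteq> y \<and> x \<noteq> y"
  then show "dist x y * - Phi f (ev_beta (x, y))
      \<le> dist x u * - Phi f (ev_beta (x, u)) + dist u y * - Phi f (ev_beta (u, y))"
    using Phi_ev_beta[OF lip, of x y] Phi_ev_beta[OF lip, of x u] Phi_ev_beta[OF lip, of u y] by simp
qed

definition gdist :: "(((('a::metric_space \<times> 'a) \<Rightarrow> real) \<Rightarrow> real) \<Rightarrow> real) \<Rightarrow> 'a \<Rightarrow> 'a \<Rightarrow> real"
  where "gdist g x u = dist x u * g (ev_beta (x, u))"

lemma gdist_triangle:
  fixes x u w :: "'a::metric_space"
  assumes g: "g \<in> Gset" and three: "\<exists>a b c :: 'a. a \<noteq> b \<and> b \<noteq> c \<and> a \<noteq> c"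
  shows "gdist g x w \<le> gdist g x u + gdist g u w"
proof -
  have tri: "gdist g a c \<le> gdist g a b + gdist g b c" if "a \<noteq> b" "b \<noteq> c" "a \<noteq> c" for a b c :: 'a
    using g that unfolding Gset_def gdist_def by blast
  have loop: "0 \<le> gdist g a b + gdist g b a" if "a \<noteq> b" for a b :: 'a
  proof -
    obtain v :: 'a where "v \<noteq> a" "v \<noteq> b"
      using three by metis
    then show ?thesis
      using tri[of v b a] tri[of v a b] that by auto
  qed
  have "gdist g a a = 0" for a :: 'a
    by (simp add: gdist_def)
  then show ?thesis
    using tri[of x u w] loop[of x u] by (cases "x = u"; cases "u = w"; cases "x = w") auto
qed

lemma abs_gdist_le:
  assumes "\<forall>\<xi>\<in>topspace betaM. \<bar>g \<xi>\<bar> \<le> B"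
  shows "\<bar>gdist g x u\<bar> \<le> B * dist x u"
proof (cases "x = u")
  case False
  then have "\<bar>g (ev_beta (x, u))\<bar> \<le> B"
    using assms ev_beta_in_betaM[of "(x, u)"] by (simp add: Mtilde_def)
  then have "dist x u * \<bar>g (ev_beta (x, u))\<bar> \<le> dist x u * B"
    by (rule mult_left_mono) simp
  then show ?thesis
    by (simp add: gdist_def abs_mult mult.commute)
qed (simp add: gdist_def)

lemma lipschitz_on_of_gdist_dominated:
  assumes B: "\<forall>\<xi>\<in>topspace betaM. \<bar>g \<xi>\<bar> \<le> B" and "0 \<le> B"
    and dom: "\<And>x u. f x - f u \<le> gdist g x u"
  shows "B-lipschitz_on UNIV f"
proof (rule lipschitz_onI)
  show "dist (f x) (f u) \<le> B * dist x u" for x u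
    using dom[of x u] dom[of u x] abs_gdist_le[OF B, of x u] abs_gdist_le[OF B, of u x]
    by (simp add: dist_real_def dist_commute abs_le_iff)
qed fact

lemma Phi_le_of_gdist_dominated:
  assumes g: "continuous_map betaM euclideanreal g" and lip: "L-lipschitz_on UNIV f"
    and dom: "\<And>x u. f x - f u \<le> gdist g x u" and \<xi>: "\<xi> \<in> topspace betaM"
  shows "Phi f \<xi> \<le> g \<xi>"
  unfolding Phi_eq betaM_apply_comp_ev_beta[OF g \<xi>]
proof (rule betaM_apply_mono[OF diff_quot_Cb_Mtilde[OF lip] Cb_Mtilde_comp_ev_beta[OF g] _ \<xi>])
  fix q :: "'a \<times> 'a"
  assume "q \<in> Mtilde"
  then have "0 < dist (fst q) (snd q)"
    by (simp add: Mtilde_def)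
  then show "diff_quot f q \<le> g (ev_beta q)"
    using dom[of "fst q" "snd q"] by (simp add: diff_quot_def gdist_def divide_le_eq mult.commute)
qed

lemma abs_mult_min_one_le:
  fixes e d r a b :: real
  assumes "\<bar>e\<bar> \<le> a" and "\<bar>e\<bar> * d \<le> b * r" and "0 \<le> d" and "0 \<le> a" and "0 \<le> b" and "0 \<le> r"
  shows "\<bar>e * min d 1\<bar> \<le> (a + b) * min r 1"
proof (cases "r \<le> 1")
  case True
  have "\<bar>e * min d 1\<bar> \<le> \<bar>e\<bar> * d"
    using assms by (simp add: abs_mult mult_left_mono)
  also have "\<dots> \<le> (a + b) * r"
    using assms by (smt (verit) mult_right_mono)
  finally show ?thesis
    using True by simp
next
  case False
  have "\<bar>e * min d 1\<bar> \<le> \<bar>e\<bar>"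
    using assms by (simp add: abs_mult mult_left_le)
  then show ?thesis
    using False assms by simp
qed

lemma Phi_eq_of_gdist_dominated:
  fixes f :: "'a::metric_space \<Rightarrow> real" and \<pi> :: "'a \<times> 'a \<Rightarrow> 'a"
  assumes g: "continuous_map betaM euclideanreal g"
    and B: "\<forall>\<xi>\<in>topspace betaM. \<bar>g \<xi>\<bar> \<le> B" and "0 \<le> B"
    and dom: "\<And>x u. f x - f u \<le> gdist g x u"
    and \<xi>: "\<xi> \<in> topspace betaM" and D0: "0 < \<xi> (\<lambda>q. min (dist (fst q) (snd q)) 1)"
    and \<pi>: "continuous_on UNIV \<pi>" and Q0: "\<xi> (\<lambda>q. min (dist (\<pi> q) y) 1) = 0"
    and "0 \<le> C" and defect: "\<And>a b. a \<noteq> b \<Longrightarrow> \<bar>f a - f b - gdist g a b\<bar> \<le> C * dist (\<pi> (a, b)) y"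
  shows "Phi f \<xi> = g \<xi>"
proof -
  have lip: "B-lipschitz_on UNIV f"
    by (rule lipschitz_on_of_gdist_dominated[OF B \<open>0 \<le> B\<close> dom])
  have D: "(\<lambda>q. min (dist (fst q) (snd q)) 1) \<in> Cb_Mtilde"
    unfolding Cb_Mtilde_iff by (intro conjI continuous_intros exI[of _ 1]) auto
  have "\<xi> (diff_quot f) = \<xi> (\<lambda>q. g (ev_beta q))"
  proof (rule betaM_apply_eq_of_weighted_bound[OF diff_quot_Cb_Mtilde[OF lip]
        Cb_Mtilde_comp_ev_beta[OF g] D Cb_Mtilde_comp_Ucb[OF trunc_dist_Ucb \<pi>] \<xi> Q0])
    show "\<xi> (\<lambda>q. min (dist (fst q) (snd q)) 1) \<noteq> 0"
      using D0 by simp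
    fix q :: "'a \<times> 'a"
    assume q: "q \<in> Mtilde"
    then obtain a b where q_eq: "q = (a, b)" and "a \<noteq> b"
      by (cases q) (auto simp: Mtilde_def)
    let ?e = "diff_quot f q - g (ev_beta q)"
    have "\<bar>?e\<bar> \<le> B + B"
      using abs_diff_quot_le[OF lip, of q] bspec[OF B ev_beta_in_betaM[OF q]] by linarith
    moreover have "?e * dist a b = f a - f b - gdist g a b"
      using \<open>a \<noteq> b\<close> by (simp add: q_eq diff_quot_def gdist_def field_simps)
    then have "\<bar>?e\<bar> * dist a b \<le> C * dist (\<pi> q) y"
      using defect[OF \<open>a \<noteq> b\<close>] by (simp add: q_eq abs_mult)
    ultimately show "\<bar>?e * min (dist (fst q) (snd q)) 1\<bar> \<le> (B + B + C) * min (dist (\<pi> q) y) 1"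
      using \<open>0 \<le> B\<close> \<open>0 \<le> C\<close> by (intro abs_mult_min_one_le) (simp_all add: q_eq)
  qed
  then show ?thesis
    unfolding Phi_eq betaM_apply_comp_ev_beta[OF g \<xi>] .
qed

lemma gdist_to_point_defect:
  fixes a b y :: "'a::metric_space"
  assumes g: "g \<in> Gset" and three: "\<exists>a b c :: 'a. a \<noteq> b \<and> b \<noteq> c \<and> a \<noteq> c"
    and B: "\<forall>\<xi>\<in>topspace betaM. \<bar>g \<xi>\<bar> \<le> B"
  shows "\<bar>gdist g a y - gdist g b y - gdist g a b\<bar> \<le> (B + B) * dist b y"
  using gdist_triangle[OF g three, of a b y] gdist_triangle[OF g three, of a y b]
    abs_gdist_le[OF B, of y b] abs_gdist_le[OF B, of b y]
  by (simp add: dist_commute abs_le_iff algebra_simps)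

lemma gdist_from_point_defect:
  fixes a b x :: "'a::metric_space"
  assumes g: "g \<in> Gset" and three: "\<exists>a b c :: 'a. a \<noteq> b \<and> b \<noteq> c \<and> a \<noteq> c"
    and B: "\<forall>\<xi>\<in>topspace betaM. \<bar>g \<xi>\<bar> \<le> B"
  shows "\<bar>- gdist g x a - - gdist g x b - gdist g a b\<bar> \<le> (B + B) * dist a x"
  using gdist_triangle[OF g three, of x b a] gdist_triangle[OF g three, of a b x]
    abs_gdist_le[OF B, of x a] abs_gdist_le[OF B, of a x]
  by (simp add: dist_commute abs_le_iff algebra_simps)

lemma gdist_to_point_dominated:
  fixes y :: "'a::metric_space"
  assumes "g \<in> Gset" and "\<exists>a b c :: 'a. a \<noteq> b \<and> b \<noteq> c \<and> a \<noteq> c"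
  shows "gdist g x y - gdist g u y \<le> gdist g x u"
  using gdist_triangle[OF assms, of x y u] by simp

lemma gdist_from_point_dominated:
  fixes x :: "'a::metric_space"
  assumes "g \<in> Gset" and "\<exists>a b c :: 'a. a \<noteq> b \<and> b \<noteq> c \<and> a \<noteq> c"
  shows "- gdist g x a - - gdist g x b \<le> gdist g a b"
  using gdist_triangle[OF assms, of x b a] by simp

lemma Phi_gdist_to_point_eq:
  fixes y :: "'a::metric_space"
  assumes g: "g \<in> Gset" and three: "\<exists>a b c :: 'a. a \<noteq> b \<and> b \<noteq> c \<and> a \<noteq> c"
    and \<xi>: "\<xi> \<in> p_preimage (S - {ev_u y}) {ev_u y}"
  shows "Phi (\<lambda>x. gdist g x y) \<xi> = g \<xi>"
proof -
  have gc: "continuous_map betaM euclideanreal g"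
    using g by (simp add: Gset_def)
  obtain B where "0 \<le> B" and B: "\<forall>\<xi>\<in>topspace betaM. \<bar>g \<xi>\<bar> \<le> B"
    using continuous_map_betaM_bounded[OF gc] by blast
  have \<xi>_top: "\<xi> \<in> topspace betaM" and "p1 \<xi> \<noteq> ev_u y" and p2: "p2 \<xi> = ev_u y"
    using \<xi> by (auto simp: p_preimage_def)
  show ?thesis
  proof (rule Phi_eq_of_gdist_dominated[where \<pi>=snd and y=y and C="B + B", OF gc B \<open>0 \<le> B\<close>
        gdist_to_point_dominated[OF g three] \<xi>_top])
    show "0 < \<xi> (\<lambda>q. min (dist (fst q) (snd q)) 1)"
      using \<open>p1 \<xi> \<noteq> ev_u y\<close> p2 by (intro betaM_apply_trunc_dist_pos[OF \<xi>_top]) auto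
    show "\<xi> (\<lambda>q. min (dist (snd q) y) 1) = 0"
      using p2_eq_ev_u_iff[OF \<xi>_top, of y] p2 by blast
    show "\<bar>gdist g a y - gdist g b y - gdist g a b\<bar> \<le> (B + B) * dist (snd (a, b)) y" for a b
      using gdist_to_point_defect[OF g three B] by simp
  qed (use \<open>0 \<le> B\<close> in \<open>auto intro: continuous_intros\<close>)
qed

lemma Phi_gdist_from_point_eq:
  fixes x :: "'a::metric_space"
  assumes g: "g \<in> Gset" and three: "\<exists>a b c :: 'a. a \<noteq> b \<and> b \<noteq> c \<and> a \<noteq> c"
    and \<xi>: "\<xi> \<in> p_preimage {ev_u x} (S - {ev_u x})"
  shows "Phi (\<lambda>w. - gdist g x w) \<xi> = g \<xi>"
proof -
  have gc: "continuous_map betaM euclideanreal g"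
    using g by (simp add: Gset_def)
  obtain B where "0 \<le> B" and B: "\<forall>\<xi>\<in>topspace betaM. \<bar>g \<xi>\<bar> \<le> B"
    using continuous_map_betaM_bounded[OF gc] by blast
  have \<xi>_top: "\<xi> \<in> topspace betaM" and p1: "p1 \<xi> = ev_u x" and "p2 \<xi> \<noteq> ev_u x"
    using \<xi> by (auto simp: p_preimage_def)
  show ?thesis
  proof (rule Phi_eq_of_gdist_dominated[where \<pi>=fst and y=x and C="B + B", OF gc B \<open>0 \<le> B\<close>
        gdist_from_point_dominated[OF g three] \<xi>_top])
    show "0 < \<xi> (\<lambda>q. min (dist (fst q) (snd q)) 1)"
      using \<open>p2 \<xi> \<noteq> ev_u x\<close> p1 by (intro betaM_apply_trunc_dist_pos[OF \<xi>_top]) auto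
    show "\<xi> (\<lambda>q. min (dist (fst q) x) 1) = 0"
      using p1_eq_ev_u_iff[OF \<xi>_top, of x] p1 by blast
    show "\<bar>- gdist g x a - - gdist g x b - gdist g a b\<bar> \<le> (B + B) * dist (fst (a, b)) x" for a b
      using gdist_from_point_defect[OF g three B] by simp
  qed (use \<open>0 \<le> B\<close> in \<open>auto intro: continuous_intros\<close>)
qed

section \<open>Integration against Radon measures\<close>

lemma borel_measurable_continuous_map_radon:
  assumes rad: "radon T \<nu>" and h: "continuous_map T euclideanreal h"
  shows "h \<in> borel_measurable \<nu>"
proof (rule borel_measurableI)
  fix S :: "real set"
  assume "open S"
  have sp: "space \<nu> = topspace T" and st: "sets \<nu> = sets (borel_of T)"
    using rad by (auto simp: radon_def)
  have "openin T {x \<in> topspace T. h x \<in> S}"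
    by (rule openin_continuous_map_preimage[OF h]) (simp add: \<open>open S\<close>)
  moreover have "sets (borel_of T) = sigma_sets (topspace T) {U. openin T U}"
    unfolding borel_of_def by (rule sets_measure_of) (auto dest: openin_subset)
  ultimately have "{x \<in> topspace T. h x \<in> S} \<in> sets \<nu>"
    using st by auto
  moreover have "h -` S \<inter> space \<nu> = {x \<in> topspace T. h x \<in> S}"
    using sp by auto
  ultimately show "h -` S \<inter> space \<nu> \<in> sets \<nu>"
    by simp
qed

lemma integrable_continuous_map_betaM:
  assumes rad: "radon betaM \<nu>" and h: "continuous_map betaM euclideanreal h"
  shows "integrable \<nu> h"
proof -
  have "finite_measure \<nu>" and sp: "space \<nu> = topspace betaM"
    using rad by (simp_all add: radon_def)
  moreover obtain B where "\<forall>\<xi>\<in>topspace betaM. \<bar>h \<xi>\<bar> \<le> B"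
    using continuous_map_betaM_bounded[OF h] by blast
  then have "AE x in \<nu>. norm (h x) \<le> B"
    using sp by (intro AE_I2) auto
  ultimately show ?thesis
    using finite_measure.integrable_const_bound borel_measurable_continuous_map_radon[OF rad h] by blast
qed

lemma integral_le_of_Phi_minorant:
  fixes z :: "'a::metric_space"
  assumes rad: "radon betaM \<mu>" and radn: "radon betaM \<nu>" and eqn: "PhiStar_eq z \<nu> \<mu>"
    and g: "continuous_map betaM euclideanreal g" and conc: "concentrated_on \<mu> S"
    and lip: "L-lipschitz_on UNIV f"
    and le: "\<And>\<xi>. \<xi> \<in> topspace betaM \<Longrightarrow> Phi f \<xi> \<le> g \<xi>"
    and eq: "\<And>\<xi>. \<xi> \<in> S \<Longrightarrow> Phi f \<xi> = g \<xi>"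
  shows "integral\<^sup>L \<mu> g \<le> integral\<^sup>L \<nu> g"
proof -
  have Phi_c: "continuous_map betaM euclideanreal (Phi f)"
    by (rule continuous_map_Phi[OF lip])
  have "AE \<xi> in \<mu>. \<xi> \<in> S"
    using conc unfolding concentrated_on_def by (intro AE_I'[of "space \<mu> - S"]) auto
  then have "integral\<^sup>L \<mu> g = integral\<^sup>L \<mu> (Phi f)"
    by (intro integral_cong_AE borel_measurable_continuous_map_radon[OF rad] g Phi_c)
      (auto simp: eq elim: AE_mp)
  also have "\<dots> = integral\<^sup>L \<mu> (Phi (\<lambda>x. f x - f z))"
    by (simp add: Phi_eq diff_quot_def)
  also have "\<dots> = integral\<^sup>L \<nu> (Phi (\<lambda>x. f x - f z))"
  proof -
    have "(L + 0)-lipschitz_on UNIV (\<lambda>x. f x - f z)"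
      by (intro lipschitz_on_diff lip lipschitz_on_constant)
    then have "(\<lambda>x. f x - f z) \<in> Lip0 z"
      by (auto simp: Lip0_def)
    then show ?thesis
      using eqn by (simp add: PhiStar_eq_def)
  qed
  also have "\<dots> = integral\<^sup>L \<nu> (Phi f)"
    by (simp add: Phi_eq diff_quot_def)
  also have "\<dots> \<le> integral\<^sup>L \<nu> g"
    using le radn
    by (intro integral_mono integrable_continuous_map_betaM[OF radn] Phi_c g) (auto simp: radon_def)
  finally show ?thesis .
qed

lemma preceq_of_PhiStar_eq:
  fixes z :: "'a::metric_space"
  assumes three: "\<exists>a b c :: 'a. a \<noteq> b \<and> b \<noteq> c \<and> a \<noteq> c"
    and rad: "radon betaM \<mu>"
    and conc: "(\<exists>y. concentrated_on \<mu> (p_preimage (S - {ev_u y}) {ev_u y}))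
             \<or> (\<exists>x. concentrated_on \<mu> (p_preimage {ev_u x} (S - {ev_u x})))"
    and radn: "radon betaM \<nu>" and eqn: "PhiStar_eq z \<nu> \<mu>"
  shows "preceq \<mu> \<nu>"
  unfolding preceq_def
proof
  fix g :: "(('a \<times> 'a \<Rightarrow> real) \<Rightarrow> real) \<Rightarrow> real"
  assume g: "g \<in> Gset"
  then have gc: "continuous_map betaM euclideanreal g"
    by (simp add: Gset_def)
  obtain B where "0 \<le> B" and B: "\<forall>\<xi>\<in>topspace betaM. \<bar>g \<xi>\<bar> \<le> B"
    using continuous_map_betaM_bounded[OF gc] by blast
  have minorant: "integral\<^sup>L \<mu> g \<le> integral\<^sup>L \<nu> g"
    if dom: "\<And>x u. f x - f u \<le> gdist g x u" and conc_f: "concentrated_on \<mu> T"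
      and eq: "\<And>\<xi>. \<xi> \<in> T \<Longrightarrow> Phi f \<xi> = g \<xi>" for f T
  proof -
    have lip: "B-lipschitz_on UNIV f"
      by (rule lipschitz_on_of_gdist_dominated[OF B \<open>0 \<le> B\<close> dom])
    show ?thesis
      by (rule integral_le_of_Phi_minorant[OF rad radn eqn gc conc_f lip
            Phi_le_of_gdist_dominated[OF gc lip dom] eq])
  qed
  from conc show "integral\<^sup>L \<mu> g \<le> integral\<^sup>L \<nu> g"
  proof (elim disjE exE)
    fix y
    assume "concentrated_on \<mu> (p_preimage (S - {ev_u y}) {ev_u y})"
    then show ?thesis
      by (rule minorant[OF gdist_to_point_dominated[OF g three]])
        (rule Phi_gdist_to_point_eq[OF g three])
  next
    fix x
    assume "concentrated_on \<mu> (p_preimage {ev_u x} (S - {ev_u x}))"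
    then show ?thesis
      by (rule minorant[OF gdist_from_point_dominated[OF g three]])
        (rule Phi_gdist_from_point_eq[OF g three])
  qed
qed

lemma PhiStar_eq_of_preceq:
  assumes "preceq \<nu> \<mu>"
  shows "PhiStar_eq z \<nu> \<mu>"
  unfolding PhiStar_eq_def
proof
  fix f
  assume "f \<in> Lip0 z"
  then obtain L where lip: "L-lipschitz_on UNIV f"
    by (auto simp: Lip0_def)
  have "integral\<^sup>L \<nu> (Phi f) \<le> integral\<^sup>L \<mu> (Phi f)"
    using assms Phi_in_Gset[OF lip] by (simp add: preceq_def)
  moreover have "integral\<^sup>L \<nu> (\<lambda>\<xi>. - Phi f \<xi>) \<le> integral\<^sup>L \<mu> (\<lambda>\<xi>. - Phi f \<xi>)"
    using assms uminus_Phi_in_Gset[OF lip] unfolding preceq_def by blast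
  ultimately show "integral\<^sup>L \<nu> (Phi f) = integral\<^sup>L \<mu> (Phi f)"
    by simp
qed

theorem proposition3p14:
  fixes z :: "'a::complete_space"
    and \<mu> :: "((('a \<times> 'a) \<Rightarrow> real) \<Rightarrow> real) measure"
  assumes three: "\<exists>a b c :: 'a. a \<noteq> b \<and> b \<noteq> c \<and> a \<noteq> c"
    and rad: "radon betaM \<mu>"
    and conc: "(\<exists>y. concentrated_on \<mu> (p_preimage (RM z - {ev_u y}) {ev_u y}))
             \<or> (\<exists>x. concentrated_on \<mu> (p_preimage {ev_u x} (RM z - {ev_u x})))"
  shows "(\<forall>\<nu>. radon betaM \<nu> \<and> PhiStar_eq z \<nu> \<mu> \<longrightarrow> preceq \<mu> \<nu>) \<and> preceq_minimal \<mu>"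
proof -
  have comparable: "\<forall>\<nu>. radon betaM \<nu> \<and> PhiStar_eq z \<nu> \<mu> \<longrightarrow> preceq \<mu> \<nu>"
    using preceq_of_PhiStar_eq[OF three rad conc] by blast
  moreover have "preceq_minimal \<mu>"
    unfolding preceq_minimal_def using comparable PhiStar_eq_of_preceq by blast
  ultimately show ?thesis ..
qed

end
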